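(* Assume that $\Phi \in C^1(B_{r_0},\mathbf{R})$ satisfies the hypotheses described in the context (so that the abstract critical-point result recalled there applies) and furthermore that for all $n \geq 2$ and all $v \in V$ for which $G(\mathcal{L}_n v) > 0$, \[ G(\mathcal{L}_n v) < n^{q+1} G(v). \] Then there is a constant $C_9 \leq C_0$ depending only on $G$ such that, provided $\alpha/m \leq C_9$ and $(\mu/m)^{1/(q-1)} \leq C_0 r_0$, the critical point $v$ of $\Phi$ given by the abstract result recalled in the context has minimal period (with respect to $t$) equal to $2\pi$.
   Context: Let $\Omega := \mathbf{R}/2\pi\mathbf{Z} \times (0,\pi)$ and let $V$ be the Hilbert space of functions $v(t,x) = \eta(t+x) - \eta(t-x)$ with $\eta \in H^1(\mathbf{R}/2\pi\mathbf{Z})$ odd (equivalently $v = \sum_{j\ge1}\xi_j \cos(jt)\sin(jx)$ with $\sum j^2\xi_j^2<\infty$), endowed with the $H^1$ norm $\|v\|^2 = \int_\Omega v_t^2 + v_x^2$. For $n \in \mathbf{N}$ and $v(t,x)=\eta(t+x)-\eta(t-x)\in V$ set $(\mathcal{L}_n v)(t,x) := \eta(n(t+x)) - \eta(n(t-x))$. Let $B_{r_0} = \{v \in V : \|v\| < r_0\}$, $S$ the unit sphere of $V$, and consider $\Phi(v) = \frac{\mu}{2}\|v\|^2 - G(v) + R(v)$ on $B_{r_0}$, where $\mu > 0$ and: (H1) $G \in C^1(V,\mathbf{R})$ is positively homogeneous of degree $q+1$ with $q>1$ and $DG: V \to V^*$ is compact; (H2) $R \in C^1(B_{r_0},\mathbf{R})$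 and $DR: B_{r_0} \to V^*$ is compact; (H3) $R(0)=0$ and there is $\alpha>0$ with $|DR(v)[v]| \leq \alpha \|v\|^{q+1}$ for all $v \in B_{r_0}$. Assume $m := \sup_{v \neq 0} G(v)/\|v\|^{q+1} > 0$, and let $K_0 := \{v \in S : G(v) = m\}$ (nonempty and compact). The abstract result used is: there is a small constant $C_0>0$ depending only on $q$ such that if $\alpha/m \leq C_0$ and $(\mu/m)^{1/(q-1)} \leq C_0 r_0$, then $\Phi$ has a critical point $v \in B_{r_0}$ at level $c = \frac{q-1}{2} m \big(\frac{\mu}{(q+1)m}\big)^{\frac{q+1}{q-1}}[1 + O(\alpha/m)]$, and moreover $v = \big(\frac{\mu}{m(q+1)}\big)^{1/(q-1)} y$ with $\mathrm{dist}(y, K_0) \leq h(\alpha/m)$ for some function $h$ depending only on $G$ with $\lim_{s\to0}h(s)=0$. *)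

theory Defs
  imports Complex_Main
begin

text \<open>The space V is represented through the coefficient sequences xi of
  v(t,x) = sum_{j>=1} xi_j cos(jt) sin(jx) with sum j^2 xi_j^2 < infinity
  (the coefficient xi 0 is forced to be 0).\<close>

definition Vsp :: "(nat \<Rightarrow> real) set" where
  "Vsp = {\<xi>. \<xi> 0 = 0 \<and> summable (\<lambda>j. (real j * \<xi> j)^2)}"

definition vfun :: "(nat \<Rightarrow> real) \<Rightarrow> real \<Rightarrow> real \<Rightarrow> real" where
  "vfun \<xi> t x = (\<Sum>j. \<xi> j * cos (real j * t) * sin (real j * x))"

text \<open>H^1 norm: int_Omega v_t^2 + v_x^2 = pi^2 * sum_j j^2 xi_j^2.\<close>
definition vnorm :: "(nat \<Rightarrow> real) \<Rightarrow> real" where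
  "vnorm \<xi> = sqrt (pi^2 * (\<Sum>j. (real j * \<xi> j)^2))"

definition vadd :: "(nat \<Rightarrow> real) \<Rightarrow> (nat \<Rightarrow> real) \<Rightarrow> (nat \<Rightarrow> real)" where
  "vadd \<xi> \<zeta> = (\<lambda>j. \<xi> j + \<zeta> j)"

definition vsub :: "(nat \<Rightarrow> real) \<Rightarrow> (nat \<Rightarrow> real) \<Rightarrow> (nat \<Rightarrow> real)" where
  "vsub \<xi> \<zeta> = (\<lambda>j. \<xi> j - \<zeta> j)"

definition vscale :: "real \<Rightarrow> (nat \<Rightarrow> real) \<Rightarrow> (nat \<Rightarrow> real)" where
  "vscale a \<xi> = (\<lambda>j. a * \<xi> j)"

text \<open>The operator L_n: eta(s) |-> eta(n s), i.e. (L_n xi)_{jn} = xi_j, other coefficients 0.\<close>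
definition Ln :: "nat \<Rightarrow> (nat \<Rightarrow> real) \<Rightarrow> (nat \<Rightarrow> real)" where
  "Ln n \<xi> = (\<lambda>k. if n dvd k then \<xi> (k div n) else 0)"

definition vball :: "real \<Rightarrow> (nat \<Rightarrow> real) set" where
  "vball r = {\<xi> \<in> Vsp. vnorm \<xi> < r}"

definition vblf :: "((nat \<Rightarrow> real) \<Rightarrow> real) \<Rightarrow> bool" where
  "vblf L \<longleftrightarrow> (\<forall>x\<in>Vsp. \<forall>y\<in>Vsp. \<forall>a b. L (vadd (vscale a x) (vscale b y)) = a * L x + b * L y)
      \<and> (\<exists>K. \<forall>x\<in>Vsp. \<bar>L x\<bar> \<le> K * vnorm x)"

definition dnorm :: "((nat \<Rightarrow> real) \<Rightarrow> real) \<Rightarrow> real" where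
  "dnorm L = Sup {\<bar>L x\<bar> | x. x \<in> Vsp \<and> vnorm x \<le> 1}"

definition vhasderiv :: "(nat \<Rightarrow> real) set \<Rightarrow> ((nat \<Rightarrow> real) \<Rightarrow> real) \<Rightarrow> (nat \<Rightarrow> real)
    \<Rightarrow> ((nat \<Rightarrow> real) \<Rightarrow> real) \<Rightarrow> bool" where
  "vhasderiv U F v L \<longleftrightarrow> vblf L \<and> (\<forall>\<epsilon>>0. \<exists>\<delta>>0. \<forall>h\<in>Vsp. vnorm h < \<delta> \<longrightarrow> vadd v h \<in> U \<longrightarrow>
      \<bar>F (vadd v h) - F v - L h\<bar> \<le> \<epsilon> * vnorm h)"

definition vC1 :: "(nat \<Rightarrow> real) set \<Rightarrow> ((nat \<Rightarrow> real) \<Rightarrow> real)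
    \<Rightarrow> ((nat \<Rightarrow> real) \<Rightarrow> (nat \<Rightarrow> real) \<Rightarrow> real) \<Rightarrow> bool" where
  "vC1 U F DF \<longleftrightarrow> (\<forall>v\<in>U. vhasderiv U F v (DF v) \<and>
      (\<forall>\<epsilon>>0. \<exists>\<delta>>0. \<forall>w\<in>U. vnorm (vsub w v) < \<delta> \<longrightarrow> dnorm (\<lambda>h. DF w h - DF v h) < \<epsilon>))"

text \<open>DF : U -> V* compact: maps bounded subsets of U to relatively compact subsets of V*
  (every bounded sequence has a subsequence whose image is Cauchy in V*, V* being complete).\<close>
definition vcompact_map :: "(nat \<Rightarrow> real) set \<Rightarrow> ((nat \<Rightarrow> real) \<Rightarrow> (nat \<Rightarrow> real) \<Rightarrow> real) \<Rightarrow> bool" where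
  "vcompact_map U DF \<longleftrightarrow> (\<forall>(s::nat \<Rightarrow> nat \<Rightarrow> real) B. (\<forall>k. s k \<in> U \<and> vnorm (s k) \<le> B) \<longrightarrow>
      (\<exists>r::nat\<Rightarrow>nat. strict_mono r \<and> (\<forall>\<epsilon>>(0::real). \<exists>N::nat. \<forall>k\<ge>N. \<forall>l\<ge>N.
         dnorm (\<lambda>h. DF (s (r k)) h - DF (s (r l)) h) < \<epsilon>)))"

definition vcompact :: "(nat \<Rightarrow> real) set \<Rightarrow> bool" where
  "vcompact K \<longleftrightarrow> K \<subseteq> Vsp \<and> (\<forall>s::nat \<Rightarrow> nat \<Rightarrow> real. (\<forall>k. s k \<in> K) \<longrightarrow>
      (\<exists>(r::nat\<Rightarrow>nat) w. strict_mono r \<and> w \<in> K \<and> (\<lambda>k. vnorm (vsub (s (r k)) w)) \<longlonglongrightarrow> 0))"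

definition vdist :: "(nat \<Rightarrow> real) \<Rightarrow> (nat \<Rightarrow> real) set \<Rightarrow> real" where
  "vdist y K = Inf ((\<lambda>w. vnorm (vsub y w)) ` K)"

definition msup :: "((nat \<Rightarrow> real) \<Rightarrow> real) \<Rightarrow> real \<Rightarrow> real" where
  "msup G q = Sup {G v / vnorm v powr (q + 1) | v. v \<in> Vsp \<and> v \<noteq> (\<lambda>_. 0)}"

definition K0 :: "((nat \<Rightarrow> real) \<Rightarrow> real) \<Rightarrow> real \<Rightarrow> (nat \<Rightarrow> real) set" where
  "K0 G q = {v \<in> Vsp. vnorm v = 1 \<and> G v = msup G q}"

definition min_period_2pi :: "(real \<Rightarrow> real \<Rightarrow> real) \<Rightarrow> bool" where
  "min_period_2pi w \<longleftrightarrow> (\<forall>t. \<forall>x\<in>{0<..<pi}. w (t + 2*pi) x = w t x) \<and>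
     (\<forall>T. 0 < T \<and> T < 2*pi \<longrightarrow> \<not> (\<forall>t. \<forall>x\<in>{0<..<pi}. w (t + T) x = w t x))"

end

(* If vfun v had a period T in (0, 2 pi), uniqueness of sine coefficients would give
   cos (j T) = 1 for every j with v_j \<noteq> 0, so all such j are multiples of one n \<ge> 2,
   i.e. v = L_n u. No maximiser w \<in> K0 has this form, since w = L_n u would give
   m = G (L_n u) < n^(q+1) G u \<le> n^(q+1) m ||u||^(q+1) = m. Compactness of K0 makes this
   quantitative: there is \<epsilon> > 0 such that every w \<in> K0 has, for every n \<ge> 2, a coefficient w_j
   with n not dividing j and j |w_j| > \<epsilon>. As pi j |y_j - w_j| \<le> ||y - w||, every y within
   pi \<epsilon> of K0 keeps such a coefficient nonzero, and C9 is chosen so that h (\<alpha>/m) < pi \<epsilon>. *)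

theory Submission
  imports Defs "HOL-Analysis.Henstock_Kurzweil_Integration"
begin

lemma Vsp_zero [simp]: "(\<lambda>_. 0) \<in> Vsp"
  by (simp add: Vsp_def)

lemma vnorm_zero [simp]: "vnorm (\<lambda>_. 0) = 0"
  by (simp add: vnorm_def)

lemma Vsp_summable: "z \<in> Vsp \<Longrightarrow> summable (\<lambda>j. (real j * z j)\<^sup>2)"
  and Vsp_coeff_0: "z \<in> Vsp \<Longrightarrow> z 0 = 0"
  by (simp_all add: Vsp_def)

lemma vnorm_nonneg: "z \<in> Vsp \<Longrightarrow> 0 \<le> vnorm z"
  unfolding vnorm_def by (intro real_sqrt_ge_zero mult_nonneg_nonneg suminf_nonneg Vsp_summable) auto

lemma vnorm_eq_0D:
  assumes "z \<in> Vsp" "vnorm z = 0"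
  shows "z = (\<lambda>_. 0)"
proof
  fix j
  have "(\<Sum>j. (real j * z j)\<^sup>2) = 0"
    using assms(2) by (simp add: vnorm_def)
  then have "(real j * z j)\<^sup>2 = 0"
    using suminf_eq_zero_iff[OF Vsp_summable[OF assms(1)]] by simp
  then show "z j = 0"
    using Vsp_coeff_0[OF assms(1)] by (cases "j = 0") auto
qed

lemma pi_mult_abs_coeff_le_vnorm:
  assumes "z \<in> Vsp"
  shows "pi * real j * \<bar>z j\<bar> \<le> vnorm z"
proof -
  have "(real j * z j)\<^sup>2 \<le> (\<Sum>j. (real j * z j)\<^sup>2)"
    using sum_le_suminf[OF Vsp_summable[OF assms], of "{j}"] by simp
  then have "sqrt (pi\<^sup>2 * (real j * z j)\<^sup>2) \<le> vnorm z"
    unfolding vnorm_def by (simp add: mult_left_mono)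
  then show ?thesis
    by (simp add: real_sqrt_mult abs_mult)
qed

lemma abs_coeff_le_vnorm:
  assumes "z \<in> Vsp"
  shows "\<bar>z j\<bar> \<le> vnorm z"
proof (cases "j = 0")
  case True
  then show ?thesis
    using assms by (simp add: Vsp_coeff_0 vnorm_nonneg)
next
  case False
  then have "1 \<le> pi * real j"
    using pi_ge_two mult_mono[of 1 pi 1 "real j"] by simp
  then have "\<bar>z j\<bar> \<le> pi * real j * \<bar>z j\<bar>"
    using mult_right_mono[of 1 "pi * real j" "\<bar>z j\<bar>"] by simp
  then show ?thesis
    using pi_mult_abs_coeff_le_vnorm[OF assms, of j] by linarith
qed

lemma vsub_in_Vsp:
  assumes "a \<in> Vsp" "b \<in> Vsp"
  shows "vsub a b \<in> Vsp"
proof -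
  have "(real j * (a j - b j))\<^sup>2 \<le> 2 * (real j * a j)\<^sup>2 + 2 * (real j * b j)\<^sup>2" for j
    using sum_squares_bound[of "- (real j * a j)" "real j * b j"]
    by (simp add: right_diff_distrib power2_diff)
  then have "summable (\<lambda>j. (real j * (a j - b j))\<^sup>2)"
    by (intro summable_comparison_test'[where N = 0, OF summable_add[OF
          summable_mult[OF Vsp_summable[OF assms(1)]] summable_mult[OF Vsp_summable[OF assms(2)]]]]) auto
  then show ?thesis
    using assms by (simp add: Vsp_def vsub_def)
qed

lemma
  assumes "a \<in> Vsp"
  shows vscale_in_Vsp: "vscale s a \<in> Vsp"
    and vnorm_vscale: "vnorm (vscale s a) = \<bar>s\<bar> * vnorm a"
proof -
  have sq: "(\<lambda>j. (real j * vscale s a j)\<^sup>2) = (\<lambda>j. s\<^sup>2 * (real j * a j)\<^sup>2)"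
    by (simp add: vscale_def power_mult_distrib mult_ac)
  show "vscale s a \<in> Vsp"
    using assms summable_mult[OF Vsp_summable[OF assms], of "s\<^sup>2"] sq
    by (simp add: Vsp_def vscale_def)
  have "vnorm (vscale s a) = sqrt (s\<^sup>2 * (pi\<^sup>2 * (\<Sum>j. (real j * a j)\<^sup>2)))"
    unfolding vnorm_def sq suminf_mult[OF Vsp_summable[OF assms]] by (simp only: mult.left_commute)
  then show "vnorm (vscale s a) = \<bar>s\<bar> * vnorm a"
    by (simp add: real_sqrt_mult vnorm_def)
qed

lemma summable_abs_coeff:
  assumes "z \<in> Vsp"
  shows "summable (\<lambda>j. \<bar>z j\<bar>)"
proof -
  have "\<bar>z j\<bar> \<le> (real j * z j)\<^sup>2 + inverse (real j ^ 2)" for j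
  proof (cases "j = 0")
    case True
    then show ?thesis
      using assms by (simp add: Vsp_coeff_0)
  next
    case False
    then have "\<bar>z j\<bar> = real j * \<bar>z j\<bar> * inverse (real j)"
      by simp
    also have "\<dots> \<le> 2 * (real j * \<bar>z j\<bar>) * inverse (real j)"
      by simp
    also have "\<dots> \<le> (real j * \<bar>z j\<bar>)\<^sup>2 + (inverse (real j))\<^sup>2"
      by (rule sum_squares_bound)
    finally show ?thesis
      by (simp add: power_mult_distrib power_inverse)
  qed
  then show ?thesis
    by (intro summable_comparison_test'[where N = 0, OF summable_add[OF Vsp_summable[OF assms]
          inverse_power_summable[of 2]]]) auto
qed

lemma sums_reindex_multiples:
  assumes "0 < n" and "\<And>k. \<not> n dvd k \<Longrightarrow> f k = 0"
  shows "(\<lambda>j. f (n * j)) sums s \<longleftrightarrow> f sums s"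
  using assms by (intro sums_mono_reindex) (auto intro: strict_monoI)

lemma vnorm_Ln:
  assumes "u \<in> Vsp" and "0 < n"
  shows "vnorm (Ln n u) = real n * vnorm u"
proof -
  define S where "S = (\<Sum>j. (real j * u j)\<^sup>2)"
  have "(\<lambda>j. (real (n * j) * Ln n u (n * j))\<^sup>2) = (\<lambda>j. (real n)\<^sup>2 * (real j * u j)\<^sup>2)"
    using assms(2) by (simp add: Ln_def power_mult_distrib mult.assoc)
  moreover have "(\<lambda>j. (real n)\<^sup>2 * (real j * u j)\<^sup>2) sums ((real n)\<^sup>2 * S)"
    unfolding S_def by (intro sums_mult summable_sums Vsp_summable assms(1))
  ultimately have sums: "(\<lambda>k. (real k * Ln n u k)\<^sup>2) sums ((real n)\<^sup>2 * S)"
    using sums_reindex_multiples[OF assms(2), of "\<lambda>k. (real k * Ln n u k)\<^sup>2"]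
    by (simp add: Ln_def)
  then have "vnorm (Ln n u) = sqrt ((real n)\<^sup>2 * (pi\<^sup>2 * S))"
    unfolding vnorm_def sums_unique[OF sums, symmetric] by (simp only: mult.left_commute)
  then show ?thesis
    by (simp add: real_sqrt_mult vnorm_def S_def)
qed

lemma in_Ln_image_if_supported_on_multiples:
  assumes w: "w \<in> Vsp" and n: "0 < n" and supp: "\<And>j. \<not> n dvd j \<Longrightarrow> w j = 0"
  shows "w \<in> Ln n ` Vsp"
proof
  show "w = Ln n (\<lambda>j. w (n * j))"
    using supp by (auto simp: Ln_def)
  have "summable (\<lambda>j. (real (n * j) * w (n * j))\<^sup>2)"
    using sums_reindex_multiples[OF n, of "\<lambda>k. (real k * w k)\<^sup>2"] supp
      summable_sums[OF Vsp_summable[OF w]]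
    by (auto simp: sums_iff)
  then have "summable (\<lambda>j. inverse ((real n)\<^sup>2) * (real (n * j) * w (n * j))\<^sup>2)"
    by (rule summable_mult)
  moreover have "(\<lambda>j. inverse ((real n)\<^sup>2) * (real (n * j) * w (n * j))\<^sup>2) = (\<lambda>j. (real j * w (n * j))\<^sup>2)"
    using n by (simp add: power_mult_distrib field_simps)
  ultimately show "(\<lambda>j. w (n * j)) \<in> Vsp"
    using Vsp_coeff_0[OF w] by (simp only: Vsp_def mem_Collect_eq mult_0_right)
qed

lemma homogeneous_at_0:
  assumes hom: "\<forall>v\<in>Vsp. \<forall>s>0. G (vscale s v) = s powr p * G v" and p: "p \<noteq> 0"
  shows "G (\<lambda>_. 0) = 0"
proof -
  have "G (\<lambda>_. 0) = 2 powr p * G (\<lambda>_. 0)"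
    using hom[rule_format, OF Vsp_zero, of 2] by (simp add: vscale_def)
  moreover have "2 powr p \<noteq> 1"
    using p by simp
  ultimately show ?thesis
    by (metis mult_cancel_right1)
qed

lemma bdd_above_homogeneous_quotient:
  assumes deriv: "vhasderiv Vsp G (\<lambda>_. 0) L"
    and hom: "\<forall>v\<in>Vsp. \<forall>s>0. G (vscale s v) = s powr p * G v" and p: "p \<noteq> 0"
  shows "bdd_above {G v / vnorm v powr p | v. v \<in> Vsp \<and> v \<noteq> (\<lambda>_. 0)}"
proof -
  obtain K where K: "\<forall>x\<in>Vsp. \<bar>L x\<bar> \<le> K * vnorm x"
    using deriv unfolding vhasderiv_def vblf_def by blast
  obtain \<delta> where "\<delta> > 0" and \<delta>: "\<forall>h\<in>Vsp. vnorm h < \<delta> \<longrightarrow> vadd (\<lambda>_. 0) h \<in> Vsp \<longrightarrow>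
      \<bar>G (vadd (\<lambda>_. 0) h) - G (\<lambda>_. 0) - L h\<bar> \<le> 1 * vnorm h"
    using deriv unfolding vhasderiv_def by (meson zero_less_one)
  define \<rho> where "\<rho> = \<delta> / 2"
  have "\<rho> > 0"
    using \<open>\<delta> > 0\<close> by (simp add: \<rho>_def)
  have G_sphere: "G h \<le> (K + 1) * \<rho>" if "h \<in> Vsp" "vnorm h = \<rho>" for h
  proof -
    have "\<bar>G h - L h\<bar> \<le> \<rho>"
      using \<delta> that \<open>\<delta> > 0\<close> homogeneous_at_0[OF hom p]
      by (auto simp: vadd_def \<rho>_def)
    then show ?thesis
      using K that by (fastforce simp: algebra_simps)
  qed
  show ?thesis
  proof (rule bdd_aboveI, safe)
    fix v assume v: "v \<in> Vsp" "v \<noteq> (\<lambda>_. 0)"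
    then have "vnorm v > 0"
      using vnorm_nonneg vnorm_eq_0D by force
    define s where "s = \<rho> / vnorm v"
    have "s > 0"
      using \<open>\<rho> > 0\<close> \<open>vnorm v > 0\<close> by (simp add: s_def)
    have "vnorm (vscale s v) = \<rho>"
      using \<open>\<rho> > 0\<close> \<open>vnorm v > 0\<close> by (simp add: vnorm_vscale[OF v(1)] s_def)
    then have "s powr p * G v \<le> (K + 1) * \<rho>"
      using G_sphere[OF vscale_in_Vsp[OF v(1)]] hom v(1) \<open>s > 0\<close> by metis
    moreover have "vnorm v powr p * s powr p = \<rho> powr p"
      using \<open>s > 0\<close> \<open>vnorm v > 0\<close> by (simp add: powr_mult[symmetric] s_def)
    then have "G v / vnorm v powr p = s powr p * G v / \<rho> powr p"
      using \<open>s > 0\<close> by (simp flip: \<open>vnorm v powr p * s powr p = \<rho> powr p\<close>)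
    ultimately show "G v / vnorm v powr p \<le> (K + 1) * \<rho> / \<rho> powr p"
      by (simp add: divide_right_mono)
  qed
qed

lemma homogeneous_le_msup:
  assumes deriv: "vhasderiv Vsp G (\<lambda>_. 0) L"
    and hom: "\<forall>v\<in>Vsp. \<forall>s>0. G (vscale s v) = s powr (q + 1) * G v" and q: "q + 1 \<noteq> 0"
    and v: "v \<in> Vsp" "v \<noteq> (\<lambda>_. 0)"
  shows "G v \<le> msup G q * vnorm v powr (q + 1)"
proof -
  have "G v / vnorm v powr (q + 1) \<le> msup G q"
    unfolding msup_def
    by (rule cSup_upper[OF _ bdd_above_homogeneous_quotient[OF deriv hom q]]) (use v in blast)
  moreover have "vnorm v > 0"
    using v vnorm_nonneg vnorm_eq_0D by force
  ultimately show ?thesis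
    by (simp add: divide_le_eq)
qed

lemma K0_coeff_off_multiples:
  assumes deriv: "vhasderiv Vsp G (\<lambda>_. 0) L"
    and hom: "\<forall>v\<in>Vsp. \<forall>s>0. G (vscale s v) = s powr (q + 1) * G v" and q: "q + 1 \<noteq> 0"
    and m_pos: "msup G q > 0"
    and G_Ln: "\<forall>n::nat. n \<ge> 2 \<longrightarrow> (\<forall>v\<in>Vsp. G (Ln n v) > 0 \<longrightarrow> G (Ln n v) < real n powr (q + 1) * G v)"
    and w: "w \<in> K0 G q" and n: "n \<ge> 2"
  shows "\<exists>j. \<not> n dvd j \<and> w j \<noteq> 0"
proof (rule ccontr)
  assume "\<not> ?thesis"
  moreover have "w \<in> Vsp" "vnorm w = 1" "G w = msup G q"
    using w by (auto simp: K0_def)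
  ultimately obtain u where u: "u \<in> Vsp" "w = Ln n u"
    using in_Ln_image_if_supported_on_multiples[of w n] n by auto
  have "vnorm u = 1 / real n"
    using vnorm_Ln[OF u(1)] u(2) \<open>vnorm w = 1\<close> n by (simp add: field_simps)
  then have "u \<noteq> (\<lambda>_. 0)" and "vnorm u powr (q + 1) = 1 / real n powr (q + 1)"
    using n by (auto simp: powr_divide)
  moreover have "G u \<le> msup G q * vnorm u powr (q + 1)"
    using homogeneous_le_msup[OF deriv hom q u(1)] \<open>u \<noteq> (\<lambda>_. 0)\<close> .
  ultimately have "G u \<le> msup G q / real n powr (q + 1)"
    by simp
  then have "real n powr (q + 1) * G u \<le> msup G q"
    using n by (simp add: pos_le_divide_eq mult.commute)
  moreover have "msup G q < real n powr (q + 1) * G u"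
    using G_Ln n u \<open>G w = msup G q\<close> m_pos by metis
  ultimately show False
    by simp
qed

lemma vcompact_subset_Vsp: "vcompact K \<Longrightarrow> K \<subseteq> Vsp"
  by (simp add: vcompact_def)

lemma vcompact_coeffwise_convergent_subseq:
  fixes s :: "nat \<Rightarrow> nat \<Rightarrow> real"
  assumes K: "vcompact K" and s: "\<And>k. s k \<in> K"
  obtains r w where "strict_mono r" "w \<in> K" "\<And>j. (\<lambda>k. s (r k) j) \<longlonglongrightarrow> w j"
proof -
  obtain r w where r: "strict_mono r" and w: "w \<in> K"
    and lim: "(\<lambda>k. vnorm (vsub (s (r k)) w)) \<longlonglongrightarrow> 0"
    using conjunct2[OF K[unfolded vcompact_def], rule_format, of s] s by blast
  have conv: "(\<lambda>k. s (r k) j - w j) \<longlonglongrightarrow> 0" for j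
  proof (rule Lim_null_comparison[OF always_eventually lim], rule allI)
    fix k
    have "s (r k) \<in> Vsp" "w \<in> Vsp"
      using vcompact_subset_Vsp[OF K] s w by auto
    then show "norm (s (r k) j - w j) \<le> vnorm (vsub (s (r k)) w)"
      using abs_coeff_le_vnorm[OF vsub_in_Vsp, of "s (r k)" w j] by (simp add: vsub_def)
  qed
  show ?thesis
    by (rule that[OF r w LIM_zero_cancel[OF conv]])
qed

lemma vcompact_uniform_coeff_bound:
  fixes S :: "nat \<Rightarrow> nat set"
  assumes K: "vcompact K" and S: "mono S"
    and nonzero: "\<forall>w\<in>K. \<exists>k. \<exists>j\<in>S k. w j \<noteq> 0"
  shows "\<exists>k \<epsilon>. 0 < \<epsilon> \<and> (\<forall>w\<in>K. \<exists>j\<in>S k. \<epsilon> < real j * \<bar>w j\<bar>)"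
proof (rule ccontr)
  assume contra: "\<not> ?thesis"
  have "\<exists>w. w \<in> K \<and> (\<forall>j\<in>S k. real j * \<bar>w j\<bar> \<le> inverse (real (Suc k)))" for k
  proof -
    have "0 < inverse (real (Suc k))"
      by simp
    then have "\<not> (\<forall>w\<in>K. \<exists>j\<in>S k. inverse (real (Suc k)) < real j * \<bar>w j\<bar>)"
      using contra by blast
    then show ?thesis
      by (auto simp: not_less)
  qed
  then obtain s where s: "\<And>k. s k \<in> K"
    and small: "\<And>k j. j \<in> S k \<Longrightarrow> real j * \<bar>s k j\<bar> \<le> inverse (real (Suc k))"
    by metis
  obtain r w where r: "strict_mono r" and w: "w \<in> K" and lim: "\<And>j. (\<lambda>k. s (r k) j) \<longlonglongrightarrow> w j"
    using vcompact_coeffwise_convergent_subseq[of K s, OF K s] by blast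
  have "w j = 0" if "j \<in> S k0" for j k0
  proof (cases "j = 0")
    case True
    then show ?thesis
      using K w Vsp_coeff_0 by (auto dest: vcompact_subset_Vsp)
  next
    case False
    have "\<bar>s (r k) j\<bar> \<le> inverse (real (Suc k))" if "k0 \<le> k" for k
    proof -
      have "k \<le> r k"
        using seq_suble[OF r] by blast
      then have "S k0 \<subseteq> S (r k)"
        using \<open>k0 \<le> k\<close> S by (simp add: monoD)
      then have "j \<in> S (r k)"
        using \<open>j \<in> S k0\<close> by blast
      then have "\<bar>s (r k) j\<bar> \<le> inverse (real (Suc (r k)))"
        using small[of j "r k"] False mult_right_mono[of 1 "real j" "\<bar>s (r k) j\<bar>"] by simp
      also have "\<dots> \<le> inverse (real (Suc k))"
        using \<open>k \<le> r k\<close> by (simp add: le_imp_inverse_le)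
      finally show ?thesis .
    qed
    then have "(\<lambda>k. s (r k) j) \<longlonglongrightarrow> 0"
      by (intro Lim_null_comparison[OF _ LIMSEQ_inverse_real_of_nat] eventually_sequentiallyI) simp
    then show ?thesis
      using lim LIMSEQ_unique by blast
  qed
  then show False
    using nonzero w by blast
qed

lemma vcompact_uniform_coeff_off_multiples:
  assumes K: "vcompact K" and nz: "(\<lambda>_. 0) \<notin> K"
    and off: "\<forall>n\<ge>2. \<forall>w\<in>K. \<exists>j. \<not> n dvd j \<and> w j \<noteq> 0"
  shows "\<exists>\<epsilon>>0. \<forall>w\<in>K. \<forall>n\<ge>2. \<exists>j. \<not> n dvd j \<and> \<epsilon> < real j * \<bar>w j\<bar>"
proof -
  \<comment> \<open>A coefficient with index j \<le> J lies off the multiples of every n > J.\<close>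
  obtain J \<epsilon>\<^sub>J where "\<epsilon>\<^sub>J > 0" and low: "\<forall>w\<in>K. \<exists>j\<in>{..J}. \<epsilon>\<^sub>J < real j * \<bar>w j\<bar>"
  proof -
    have "\<forall>w\<in>K. \<exists>k. \<exists>j\<in>{..k}. w j \<noteq> 0"
      using nz by (metis atMost_iff le_refl ext)
    then show ?thesis
      using vcompact_uniform_coeff_bound[OF K, of atMost] that by (auto simp: mono_def)
  qed
  have "\<exists>\<epsilon>>0. \<forall>w\<in>K. \<exists>j. \<not> n dvd j \<and> \<epsilon> < real j * \<bar>w j\<bar>" if "n \<ge> 2" for n
    using vcompact_uniform_coeff_bound[OF K, of "\<lambda>_. {j. \<not> n dvd j}"] off that
    by (auto simp: mono_def)
  then obtain \<epsilon>\<^sub>n where \<epsilon>\<^sub>n: "\<And>n. n \<ge> 2 \<Longrightarrow> \<epsilon>\<^sub>n n > 0 \<and> (\<forall>w\<in>K. \<exists>j. \<not> n dvd j \<and> \<epsilon>\<^sub>n n < real j * \<bar>w j\<bar>)"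
    by metis
  define \<epsilon> where "\<epsilon> = Min (insert \<epsilon>\<^sub>J (\<epsilon>\<^sub>n ` {2..J}))"
  have "\<epsilon> > 0"
    using \<open>\<epsilon>\<^sub>J > 0\<close> \<epsilon>\<^sub>n by (auto simp: \<epsilon>_def)
  moreover have "\<exists>j. \<not> n dvd j \<and> \<epsilon> < real j * \<bar>w j\<bar>" if "w \<in> K" "n \<ge> 2" for w n
  proof (cases "n \<le> J")
    case True
    then show ?thesis
      using \<epsilon>\<^sub>n[OF \<open>n \<ge> 2\<close>] \<open>w \<in> K\<close> Min_le[of "insert \<epsilon>\<^sub>J (\<epsilon>\<^sub>n ` {2..J})" "\<epsilon>\<^sub>n n"] \<open>n \<ge> 2\<close>
      by (force simp: \<epsilon>_def)
  next
    case False
    obtain j where "j \<le> J" "\<epsilon>\<^sub>J < real j * \<bar>w j\<bar>"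
      using low \<open>w \<in> K\<close> by auto
    moreover from this have "0 < j"
      using \<open>\<epsilon>\<^sub>J > 0\<close> by (cases j) auto
    with False \<open>j \<le> J\<close> have "\<not> n dvd j"
      by (auto dest: dvd_imp_le)
    moreover have "\<epsilon> \<le> \<epsilon>\<^sub>J"
      by (simp add: \<epsilon>_def)
    ultimately show ?thesis
      by force
  qed
  ultimately show ?thesis
    by blast
qed

lemma K0_uniform_coeff_off_multiples:
  assumes deriv: "vhasderiv Vsp G (\<lambda>_. 0) L"
    and hom: "\<forall>v\<in>Vsp. \<forall>s>0. G (vscale s v) = s powr (q + 1) * G v" and q: "q + 1 \<noteq> 0"
    and m_pos: "msup G q > 0"
    and G_Ln: "\<forall>n::nat. n \<ge> 2 \<longrightarrow> (\<forall>v\<in>Vsp. G (Ln n v) > 0 \<longrightarrow> G (Ln n v) < real n powr (q + 1) * G v)"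
    and K0_cpt: "vcompact (K0 G q)"
  shows "\<exists>\<epsilon>>0. \<forall>w\<in>K0 G q. \<forall>n\<ge>2. \<exists>j. \<not> n dvd j \<and> \<epsilon> < real j * \<bar>w j\<bar>"
proof (rule vcompact_uniform_coeff_off_multiples[OF K0_cpt])
  show "(\<lambda>_. 0) \<notin> K0 G q"
    by (simp add: K0_def)
  show "\<forall>n\<ge>2. \<forall>w\<in>K0 G q. \<exists>j. \<not> n dvd j \<and> w j \<noteq> 0"
    using K0_coeff_off_multiples[OF deriv hom q m_pos G_Ln] by blast
qed

lemma cos_int_mult_has_integral:
  fixes a :: int
  shows "((\<lambda>x. cos (of_int a * x)) has_integral (if a = 0 then pi else 0)) {0..pi}"
proof (cases "a = 0")
  case True
  then show ?thesis
    using has_integral_const_real[of "1::real" 0 pi] by simp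
next
  case False
  have "((\<lambda>x. cos (of_int a * x)) has_integral (sin (of_int a * pi) / of_int a - sin (of_int a * 0) / of_int a)) {0..pi}"
  proof (rule fundamental_theorem_of_calculus)
    show "((\<lambda>x. sin (of_int a * x) / of_int a) has_vector_derivative cos (of_int a * x)) (at x within {0..pi})" for x
      using False
      by (auto intro!: derivative_eq_intros simp flip: has_real_derivative_iff_has_vector_derivative)
  qed simp
  then show ?thesis
    using False by (simp add: mult.commute)
qed

lemma sin_mult_sin_has_integral:
  fixes i k :: nat
  assumes "0 < k"
  shows "((\<lambda>x. sin (real i * x) * sin (real k * x)) has_integral (if i = k then pi / 2 else 0)) {0..pi}"
proof -
  have "(\<lambda>x. sin (real i * x) * sin (real k * x)) =
      (\<lambda>x. (cos (of_int (int i - int k) * x) - cos (of_int (int i + int k) * x)) / 2)"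
    by (rule ext, subst sin_times_sin) (simp add: left_diff_distrib distrib_right)
  moreover have "(if i = k then pi / 2 else 0) =
      ((if int i - int k = 0 then pi else 0) - (if int i + int k = 0 then pi else 0)) / 2"
    using assms by auto
  ultimately show ?thesis
    by (simp only:) (intro has_integral_divide has_integral_diff cos_int_mult_has_integral)
qed

lemma sine_series_coeff_has_integral:
  fixes c :: "nat \<Rightarrow> real"
  assumes c: "summable (\<lambda>j. \<bar>c j\<bar>)" and k: "0 < k"
  shows "((\<lambda>x. (\<Sum>j. c j * sin (real j * x)) * sin (real k * x)) has_integral c k * (pi / 2)) {0..pi}"
proof -
  define f where "f = (\<lambda>i x. c i * sin (real i * x) * sin (real k * x))"
  have "uniform_limit {0..pi} (\<lambda>n x. \<Sum>i<n. f i x) (\<lambda>x. \<Sum>i. f i x) sequentially"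
    by (rule Weierstrass_m_test[OF _ c])
      (simp add: f_def abs_mult mult_le_one mult.assoc mult_left_le)
  moreover have "continuous_on {0..pi} (\<lambda>x. \<Sum>i<n. f i x)" for n
    unfolding f_def by (intro continuous_intros)
  ultimately obtain I J where I: "\<And>n. ((\<lambda>x. \<Sum>i<n. f i x) has_integral I n) {0..pi}"
    and J: "((\<lambda>x. \<Sum>i. f i x) has_integral J) {0..pi}" and IJ: "I \<longlonglongrightarrow> J"
    by (rule uniform_limit_integral) auto
  have "((\<lambda>x. \<Sum>i<n. f i x) has_integral (\<Sum>i<n. c i * (if i = k then pi / 2 else 0))) {0..pi}" for n
    unfolding f_def mult.assoc
    by (intro has_integral_sum finite_lessThan has_integral_mult_right sin_mult_sin_has_integral k)
  moreover have "(\<Sum>i<n. c i * (if i = k then pi / 2 else 0)) = (if k < n then c k * (pi / 2) else 0)" for n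
    by (subst sum.cong[OF refl, of _ _ "\<lambda>i. if i = k then c k * (pi / 2) else 0"]) auto
  ultimately have I_eq: "I n = (if k < n then c k * (pi / 2) else 0)" for n
    using has_integral_unique[OF I] by metis
  have "\<forall>\<^sub>F n in sequentially. I n = c k * (pi / 2)"
    using eventually_gt_at_top[of k] by eventually_elim (simp add: I_eq)
  then have J_eq: "J = c k * (pi / 2)"
    using LIMSEQ_unique[OF _ IJ] tendsto_eventually by blast
  have "(\<Sum>i. f i x) = (\<Sum>j. c j * sin (real j * x)) * sin (real k * x)" for x
  proof -
    have "summable (\<lambda>j. c j * sin (real j * x))"
      by (rule summable_comparison_test'[where N = 0, OF c]) (simp add: abs_mult mult_left_le)
    then show ?thesis
      unfolding f_def by (rule suminf_mult2[symmetric])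
  qed
  then show ?thesis
    using J unfolding J_eq by simp
qed

lemma sine_series_coeff_eq_0:
  fixes c :: "nat \<Rightarrow> real"
  assumes c: "summable (\<lambda>j. \<bar>c j\<bar>)"
    and zero: "\<And>x. x \<in> {0<..<pi} \<Longrightarrow> (\<Sum>j. c j * sin (real j * x)) = 0"
    and k: "0 < k"
  shows "c k = 0"
proof -
  have "(\<Sum>j. c j * sin (real j * x)) * sin (real k * x) = 0" if "x \<in> {0..pi}" for x
  proof -
    have "x = 0 \<or> x = pi \<or> x \<in> {0<..<pi}"
      using that by auto
    then show ?thesis
      using zero by auto
  qed
  then have "((\<lambda>x. (\<Sum>j. c j * sin (real j * x)) * sin (real k * x)) has_integral 0) {0..pi}"
    by (intro has_integral_eq[OF _ has_integral_0]) simp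
  then have "c k * (pi / 2) = 0"
    using has_integral_unique[OF sine_series_coeff_has_integral[OF c k]] by blast
  then show ?thesis
    by simp
qed

lemma vfun_periodic: "vfun v (t + 2 * pi) x = vfun v t x"
proof -
  have "cos (real j * (t + 2 * pi)) = cos (real j * t)" for j
    using sin_npi[of "2 * j"] cos_npi[of "2 * j"] by (simp add: distrib_left cos_add mult.assoc mult.left_commute)
  then show ?thesis
    by (simp add: vfun_def)
qed

lemma vfun_period_imp_cos_eq_1:
  assumes v: "v \<in> Vsp" and per: "\<forall>t. \<forall>x\<in>{0<..<pi}. vfun v (t + T) x = vfun v t x"
    and "v j \<noteq> 0"
  shows "cos (real j * T) = 1"
proof -
  define c where "c i = v i * (cos (real i * T) - 1)" for i
  have "summable (\<lambda>i. \<bar>c i\<bar>)"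
  proof (rule summable_comparison_test'[where N = 0, OF summable_mult[OF summable_abs_coeff[OF v], of 2]])
    fix i
    have "\<bar>c i\<bar> = \<bar>v i\<bar> * \<bar>cos (real i * T) - 1\<bar>"
      by (simp add: c_def abs_mult)
    also have "\<dots> \<le> \<bar>v i\<bar> * 2"
      using abs_cos_le_one[of "real i * T"] by (intro mult_left_mono) auto
    finally show "norm \<bar>c i\<bar> \<le> 2 * \<bar>v i\<bar>"
      by simp
  qed
  moreover have "(\<Sum>i. c i * sin (real i * x)) = 0" if x: "x \<in> {0<..<pi}" for x
  proof -
    have sT: "summable (\<lambda>i. v i * (cos (real i * T) * sin (real i * x)))"
      and s0: "summable (\<lambda>i. v i * sin (real i * x))"
      by (auto intro!: summable_comparison_test'[where N = 0, OF summable_abs_coeff[OF v]]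
          simp: abs_mult mult_le_one mult_left_le)
    have "vfun v T x - vfun v 0 x = (\<Sum>i. v i * (cos (real i * T) * sin (real i * x)) - v i * sin (real i * x))"
      unfolding vfun_def using suminf_diff[OF sT s0] by (simp add: mult.assoc)
    also have "\<dots> = (\<Sum>i. c i * sin (real i * x))"
      by (simp add: c_def algebra_simps)
    finally show ?thesis
      using per[rule_format, of x 0] x by simp
  qed
  moreover have "0 < j"
    using \<open>v j \<noteq> 0\<close> Vsp_coeff_0[OF v] by (cases j) simp_all
  ultimately have "c j = 0"
    by (rule sine_series_coeff_eq_0) auto
  then show ?thesis
    using \<open>v j \<noteq> 0\<close> by (simp add: c_def)
qed

lemma cos_ne_1_between_0_2pi:
  assumes "0 < T" "T < 2 * pi"
  shows "cos T \<noteq> 1"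
proof
  assume "cos T = 1"
  then obtain k :: int where "T = of_int k * 2 * pi"
    by (auto simp: cos_one_2pi_int)
  then have "0 < of_int k * (2 * pi)" "of_int k * (2 * pi) < 1 * (2 * pi)"
    using assms by (simp_all add: mult.assoc)
  then have "0 < k" "k < 1"
    by (simp_all add: zero_less_mult_iff mult_less_cancel_right_pos)
  then show False
    by simp
qed

lemma cos_mult_mod_eq_1:
  assumes "cos (real j * T) = 1" "cos (real n * T) = 1"
  shows "cos (real (j mod n) * T) = 1"
proof -
  obtain k\<^sub>j k\<^sub>n :: int where k\<^sub>j: "real j * T = of_int k\<^sub>j * 2 * pi"
    and k\<^sub>n: "real n * T = of_int k\<^sub>n * 2 * pi"
    using assms by (auto simp: cos_one_2pi_int)
  have "real j = real (j div n) * real n + real (j mod n)"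
    by (metis div_mult_mod_eq of_nat_add of_nat_mult)
  then have "real (j mod n) * T = real j * T - real (j div n) * (real n * T)"
    by (simp add: algebra_simps)
  also have "\<dots> = of_int (k\<^sub>j - int (j div n) * k\<^sub>n) * 2 * pi"
    unfolding k\<^sub>j k\<^sub>n by (simp add: algebra_simps)
  finally show ?thesis
    unfolding cos_one_2pi_int by blast
qed

lemma cos_eq_1_imp_dvd:
  fixes T :: real
  assumes "0 < T" "T < 2 * pi"
  shows "\<exists>n\<ge>2. \<forall>j. cos (real j * T) = 1 \<longrightarrow> n dvd j"
proof (cases "\<exists>j>0. cos (real j * T) = 1")
  case False
  then have "cos (real j * T) = 1 \<Longrightarrow> j = 0" for j
    by auto
  then show ?thesis
    by (intro exI[of _ 2]) auto
next
  case True
  define P where "P j \<longleftrightarrow> 0 < j \<and> cos (real j * T) = 1" for j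
  define n where "n = (LEAST j. P j)"
  have "\<exists>j. P j"
    using True by (simp add: P_def)
  then have "P n"
    unfolding n_def by (rule LeastI_ex)
  have "n dvd j" if "cos (real j * T) = 1" for j
  proof (rule ccontr)
    assume "\<not> n dvd j"
    then have "P (j mod n)"
      using cos_mult_mod_eq_1[OF that] \<open>P n\<close> by (simp add: P_def dvd_eq_mod_eq_0)
    then have "n \<le> j mod n"
      unfolding n_def by (rule Least_le)
    moreover have "j mod n < n"
      using \<open>P n\<close> by (simp add: P_def)
    ultimately show False
      by simp
  qed
  moreover have "n \<noteq> 1"
    using \<open>P n\<close> cos_ne_1_between_0_2pi[OF assms] by (auto simp: P_def)
  ultimately show ?thesis
    using \<open>P n\<close> by (intro exI[of _ n]) (auto simp: P_def)
qed

lemma min_period_2pi_vfunI: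
  assumes v: "v \<in> Vsp" and off: "\<forall>n\<ge>2. \<exists>j. \<not> n dvd j \<and> v j \<noteq> 0"
  shows "min_period_2pi (vfun v)"
  unfolding min_period_2pi_def
proof (intro conjI allI ballI impI notI)
  show "vfun v (t + 2 * pi) x = vfun v t x" for t x
    by (rule vfun_periodic)
next
  fix T :: real
  assume "0 < T \<and> T < 2 * pi" and per: "\<forall>t. \<forall>x\<in>{0<..<pi}. vfun v (t + T) x = vfun v t x"
  then obtain n where "n \<ge> 2" and n: "\<forall>j. cos (real j * T) = 1 \<longrightarrow> n dvd j"
    using cos_eq_1_imp_dvd by blast
  then obtain j where "\<not> n dvd j" "v j \<noteq> 0"
    using off by blast
  then show False
    using n vfun_period_imp_cos_eq_1[OF v per] by blast
qed

lemma coeff_off_multiples_if_vdist_less: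
  assumes K: "K \<noteq> {}" "K \<subseteq> Vsp" and y: "y \<in> Vsp"
    and \<epsilon>: "\<forall>w\<in>K. \<forall>n\<ge>2. \<exists>j. \<not> n dvd j \<and> \<epsilon> < real j * \<bar>w j\<bar>"
    and dist: "vdist y K < pi * \<epsilon>" and n: "n \<ge> 2"
  shows "\<exists>j. \<not> n dvd j \<and> y j \<noteq> 0"
proof -
  obtain w where "w \<in> K" and w: "vnorm (vsub y w) < pi * \<epsilon>"
    using cInf_lessD[of "(\<lambda>w. vnorm (vsub y w)) ` K"] dist K(1) unfolding vdist_def by blast
  then obtain j where "\<not> n dvd j" and j: "\<epsilon> < real j * \<bar>w j\<bar>"
    using \<epsilon> n by blast
  have "pi * (real j * \<bar>y j - w j\<bar>) \<le> vnorm (vsub y w)"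
    using pi_mult_abs_coeff_le_vnorm[OF vsub_in_Vsp[OF y], of w j] \<open>w \<in> K\<close> K(2)
    by (auto simp: vsub_def mult.assoc)
  with w have "pi * (real j * \<bar>y j - w j\<bar>) < pi * \<epsilon>"
    by linarith
  then have "real j * \<bar>y j - w j\<bar> < \<epsilon>"
    by simp
  then have "y j \<noteq> 0"
    using j by auto
  with \<open>\<not> n dvd j\<close> show ?thesis
    by blast
qed

lemma min_period_2pi_vscale_if_vdist_less:
  assumes "K \<noteq> {}" "K \<subseteq> Vsp" and y: "y \<in> Vsp" and "c \<noteq> 0"
    and "\<forall>w\<in>K. \<forall>n\<ge>2. \<exists>j. \<not> n dvd j \<and> \<epsilon> < real j * \<bar>w j\<bar>"
    and "vdist y K < pi * \<epsilon>"
  shows "min_period_2pi (vfun (vscale c y))"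
  using coeff_off_multiples_if_vdist_less[of K y \<epsilon>] assms
  by (intro min_period_2pi_vfunI vscale_in_Vsp[OF y]) (auto simp: vscale_def)

theorem lemma4p3:
  fixes q C0 :: real
    and G :: "(nat \<Rightarrow> real) \<Rightarrow> real"
    and DG :: "(nat \<Rightarrow> real) \<Rightarrow> (nat \<Rightarrow> real) \<Rightarrow> real"
    and h :: "real \<Rightarrow> real"
  assumes q: "q > 1"
    and C0: "C0 > 0"
    and G_C1: "vC1 Vsp G DG"
    and DG_compact: "vcompact_map Vsp DG"
    and G_hom: "\<forall>v\<in>Vsp. \<forall>s>0. G (vscale s v) = s powr (q + 1) * G v"
    and m_pos: "msup G q > 0"
    and K0_ne: "K0 G q \<noteq> {}"
    and K0_cpt: "vcompact (K0 G q)"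
    and h_lim: "(h \<longlongrightarrow> 0) (at_right 0)"
    and G_Ln: "\<forall>n::nat. n \<ge> 2 \<longrightarrow> (\<forall>v\<in>Vsp. G (Ln n v) > 0 \<longrightarrow> G (Ln n v) < real n powr (q + 1) * G v)"
  shows "\<exists>C9. 0 < C9 \<and> C9 \<le> C0 \<and>
    (\<forall>\<mu> r0 \<alpha> (R :: (nat \<Rightarrow> real) \<Rightarrow> real) (DR :: (nat \<Rightarrow> real) \<Rightarrow> (nat \<Rightarrow> real) \<Rightarrow> real) v.
       let m = msup G q;
           \<Phi> = (\<lambda>w. \<mu> / 2 * (vnorm w)^2 - G w + R w)
       in
       \<mu> > 0 \<longrightarrow> r0 > 0 \<longrightarrow> \<alpha> > 0 \<longrightarrow>
       vC1 (vball r0) R DR \<longrightarrow> vcompact_map (vball r0) DR \<longrightarrow>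
       R (\<lambda>_. 0) = 0 \<longrightarrow>
       (\<forall>w\<in>vball r0. \<bar>DR w w\<bar> \<le> \<alpha> * vnorm w powr (q + 1)) \<longrightarrow>
       \<alpha> / m \<le> C9 \<longrightarrow>
       (\<mu> / m) powr (1 / (q - 1)) \<le> C0 * r0 \<longrightarrow>
       v \<in> vball r0 \<longrightarrow>
       vhasderiv (vball r0) \<Phi> v (\<lambda>_. 0) \<longrightarrow>
       (\<exists>y\<in>Vsp. v = vscale ((\<mu> / (m * (q + 1))) powr (1 / (q - 1))) y
                 \<and> vdist y (K0 G q) \<le> h (\<alpha> / m)) \<longrightarrow>
       min_period_2pi (vfun v))"
proof -
  have "vhasderiv Vsp G (\<lambda>_. 0) (DG (\<lambda>_. 0))" "q + 1 \<noteq> 0"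
    using G_C1 q by (simp_all add: vC1_def)
  then obtain \<epsilon> where "\<epsilon> > 0" and \<epsilon>: "\<forall>w\<in>K0 G q. \<forall>n\<ge>2. \<exists>j. \<not> n dvd j \<and> \<epsilon> < real j * \<bar>w j\<bar>"
    using K0_uniform_coeff_off_multiples[OF _ G_hom _ m_pos G_Ln K0_cpt] by blast
  obtain d where "d > 0" and d: "\<And>s. 0 < s \<Longrightarrow> s < d \<Longrightarrow> h s < pi * \<epsilon>"
    using order_tendstoD(2)[OF h_lim, of "pi * \<epsilon>"] \<open>\<epsilon> > 0\<close>
    unfolding eventually_at_right_field by auto
  have core: "min_period_2pi (vfun (vscale ((\<mu> / (msup G q * (q + 1))) powr (1 / (q - 1))) y))"
    if "\<mu> > 0" "\<alpha> > 0" "\<alpha> / msup G q \<le> min C0 (d / 2)"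
      and "y \<in> Vsp" "vdist y (K0 G q) \<le> h (\<alpha> / msup G q)"
    for \<mu> \<alpha> :: real and y
  proof (rule min_period_2pi_vscale_if_vdist_less[OF K0_ne _ \<open>y \<in> Vsp\<close> _ \<epsilon>])
    show "K0 G q \<subseteq> Vsp"
      by (auto simp: K0_def)
    show "(\<mu> / (msup G q * (q + 1))) powr (1 / (q - 1)) \<noteq> 0"
      using that(1) m_pos q by simp
    have "\<alpha> / msup G q < d"
      using that(3) \<open>d > 0\<close> min.cobounded2[of C0 "d / 2"] by linarith
    then show "vdist y (K0 G q) < pi * \<epsilon>"
      using d[of "\<alpha> / msup G q"] that(2,5) m_pos by simp
  qed
  have "0 < min C0 (d / 2)" "min C0 (d / 2) \<le> C0"
    using C0 \<open>d > 0\<close> by auto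
  then show ?thesis
    unfolding Let_def by (blast intro: core)
qed

end
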